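(* For every $f\in L^{\infty}(\mathbb{R}_+)$, $\overline{E}_{\infty}(f)=\overline{M}_1(f)$. In particular, the summability methods $(E_\infty,\mathcal{D}(E_\infty))$ and $(M_1,\mathcal{D}(M_1))$ coincide.
   Context: $L^{\infty}(\mathbb{R}_+)$ is the space of real-valued essentially bounded measurable functions on $[0,\infty)$. Let $(Sf)(x)=e^{-x}\int_0^xf(t)e^t\,dt$, $\overline{E}_k(f)=\limsup_{x\to\infty}(S^kf)(x)$ for $k\ge1$ (nonincreasing in $k$), and $\overline{E}_\infty(f)=\lim_{k\to\infty}\overline{E}_k(f)$. Let $\overline{M}_1(f)=\lim_{\theta\to\infty}\limsup_{x\to\infty}\frac1\theta\int_x^{x+\theta}f(t)\,dt$. For such a sublinear functional $\overline{F}$, the summability method $(F,\mathcal{D}(F))$ has domain $\{f:\overline{F}(f)=-\overline{F}(-f)\}$ and value $F(f)=\overline{F}(f)$ there. *)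

theory Defs
  imports "HOL-Analysis.Analysis"
begin

text \<open>Real-valued essentially bounded (Lebesgue) measurable functions on [0,\<infinity>).
  Functions are represented as real \<Rightarrow> real; values at negative arguments are irrelevant.\<close>
definition Linf :: "(real \<Rightarrow> real) set" where
  "Linf = {f. set_borel_measurable lebesgue {0..} f \<and>
              (\<exists>C. AE x in lebesgue. x \<in> {0..} \<longrightarrow> \<bar>f x\<bar> \<le> C)}"

definition Sop :: "(real \<Rightarrow> real) \<Rightarrow> real \<Rightarrow> real" where
  "Sop f x = exp (- x) * (LINT t:{0..x}|lebesgue. f t * exp t)"

definition Ebar :: "nat \<Rightarrow> (real \<Rightarrow> real) \<Rightarrow> ereal" where
  "Ebar k f = Limsup at_top (\<lambda>x. ereal ((Sop ^^ k) f x))"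

definition Ebar_inf :: "(real \<Rightarrow> real) \<Rightarrow> ereal" where
  "Ebar_inf f = lim (\<lambda>k. Ebar (Suc k) f)"

definition Mbar1 :: "(real \<Rightarrow> real) \<Rightarrow> ereal" where
  "Mbar1 f = Lim at_top (\<lambda>\<theta>. Limsup at_top
       (\<lambda>x. ereal ((1 / \<theta>) * (LINT t:{x..x+\<theta>}|lebesgue. f t))))"

text \<open>Domain of the summability method induced by a sublinear functional;
  its value on the domain is the functional itself.\<close>
definition sm_domain :: "((real \<Rightarrow> real) \<Rightarrow> ereal) \<Rightarrow> (real \<Rightarrow> real) set" where
  "sm_domain F = {f \<in> Linf. F f = - F (\<lambda>x. - f x)}"

end

theory Submission
  imports Defs "HOL-Real_Asymp.Real_Asymp"
begin

text \<open>
  Replace \<open>f\<close> by a bounded Borel function \<open>g\<close>, \<open>\<bar>g\<bar> \<le> C\<close>, equal to it almost everywhere on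
  \<open>[0, \<infinity>)\<close>, and write \<open>M\<^sub>\<theta> g\<close> for the averages of \<open>g\<close> over windows \<open>[x, x + \<theta>]\<close>.
  Integrating \<open>(S h)' = h - S h\<close> over a window shows that \<open>M\<^sub>\<theta> h\<close> and \<open>M\<^sub>\<theta> (S h)\<close> differ by at
  most \<open>2 C / \<theta>\<close>; as \<open>M\<^sub>\<theta>\<close> does not increase upper limits, \<open>limsup M\<^sub>\<theta> g \<le> limsup S\<^sup>k g + 2 k C / \<theta>\<close>.
  Conversely \<open>S\<^sup>k\<close> is convolution with an Erlang density whose maximum is \<open>O(1 / \<surd>k)\<close>, so
  \<open>S\<^sup>k g\<close> is \<open>O(C / \<surd>k)\<close>-Lipschitz and within \<open>O(\<theta> C / \<surd>k)\<close> of its window averages, while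
  \<open>M\<^sub>\<theta>\<close> commutes with \<open>S\<close> up to an exponentially small error and \<open>S\<close> does not increase upper
  limits either; hence \<open>limsup S\<^sup>k g \<le> limsup M\<^sub>\<theta> g + O(\<theta> C / \<surd>k)\<close>.  Letting \<open>\<theta> \<rightarrow> \<infinity>\<close> in the
  first bound and \<open>k \<rightarrow> \<infinity>\<close> in the second shows that both limits exist and coincide.
\<close>

section \<open>Integrals over compact intervals\<close>

lemma set_integral_cong:
  fixes f g :: "'a \<Rightarrow> real"
  shows "(\<And>x. x \<in> A \<Longrightarrow> f x = g x) \<Longrightarrow> (LINT x:A|M. f x) = (LINT x:A|M. g x)"
  unfolding set_lebesgue_integral_def
  by (rule Bochner_Integration.integral_cong[OF refl]) (auto simp: indicator_def)

lemma set_integrable_Icc_bounded: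
  fixes h :: "real \<Rightarrow> real"
  assumes "h \<in> borel_measurable borel" "\<And>t. t \<in> {a..b} \<Longrightarrow> \<bar>h t\<bar> \<le> M"
  shows "set_integrable lborel {a..b} h"
  unfolding set_integrable_def
  by (rule integrableI_bounded_set_indicator[where B=M]) (use assms in \<open>auto simp: emeasure_lborel_Icc_eq\<close>)

lemma set_integral_Icc_const:
  assumes "a \<le> b"
  shows "(LINT t:{a..b}|lborel. (c::real)) = c * (b - a)"
  using assms by (subst set_integral_const) (auto simp: emeasure_lborel_Icc_eq)

lemma set_integral_Icc_mono:
  fixes f g :: "real \<Rightarrow> real"
  assumes "f \<in> borel_measurable borel" "g \<in> borel_measurable borel"
    and "\<And>t. t \<in> {a..b} \<Longrightarrow> \<bar>f t\<bar> \<le> M" "\<And>t. t \<in> {a..b} \<Longrightarrow> \<bar>g t\<bar> \<le> M"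
    and "\<And>t. t \<in> {a..b} \<Longrightarrow> f t \<le> g t"
  shows "(LINT t:{a..b}|lborel. f t) \<le> (LINT t:{a..b}|lborel. g t)"
  by (rule set_integral_mono)
     (use assms set_integrable_Icc_bounded[of f a b M] set_integrable_Icc_bounded[of g a b M] in auto)

lemma abs_set_integral_Icc_le:
  fixes h :: "real \<Rightarrow> real"
  assumes "h \<in> borel_measurable borel" "\<And>t. t \<in> {a..b} \<Longrightarrow> \<bar>h t\<bar> \<le> M" "a \<le> b"
  shows "\<bar>LINT t:{a..b}|lborel. h t\<bar> \<le> M * (b - a)"
proof -
  have "0 \<le> M" using assms(2)[of a] assms(3) by auto
  have "\<bar>LINT t:{a..b}|lborel. h t\<bar> \<le> (LINT t:{a..b}|lborel. \<bar>h t\<bar>)"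
    using set_integral_norm_bound[OF set_integrable_Icc_bounded[OF assms(1,2)]] by simp
  also have "\<dots> \<le> (LINT t:{a..b}|lborel. M)"
    by (rule set_integral_Icc_mono[where M=M]) (use assms \<open>0 \<le> M\<close> in auto)
  finally show ?thesis using assms(3) by (simp add: set_integral_Icc_const)
qed

lemma set_integral_Icc_FTC:
  fixes f F :: "real \<Rightarrow> real"
  assumes "a \<le> b" "\<And>x. a \<le> x \<Longrightarrow> x \<le> b \<Longrightarrow> (F has_real_derivative f x) (at x)"
    and "continuous_on {a..b} f"
  shows "(LINT x:{a..b}|lborel. f x) = F b - F a"
  unfolding set_lebesgue_integral_def
  by (rule integral_FTC_atLeastAtMost[OF assms(1) _ assms(3)])
     (use assms(2) in \<open>auto simp: has_real_derivative_iff_has_vector_derivative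
        intro: has_vector_derivative_at_within\<close>)

lemma set_integral_Icc_split:
  fixes h :: "real \<Rightarrow> real"
  assumes "h \<in> borel_measurable borel" "\<And>t. t \<in> {a..c} \<Longrightarrow> \<bar>h t\<bar> \<le> M" "a \<le> b" "b \<le> c"
  shows "(LINT t:{a..c}|lborel. h t) = (LINT t:{a..b}|lborel. h t) + (LINT t:{b..c}|lborel. h t)"
proof -
  have int: "set_integrable lborel {a..c} h"
    by (rule set_integrable_Icc_bounded) (use assms in auto)
  have "(LBINT x=ereal a..ereal b. h x) + (LBINT x=ereal b..ereal c. h x) = (LBINT x=ereal a..ereal c. h x)"
    by (rule interval_integral_sum)
       (use assms int in \<open>auto simp: interval_lebesgue_integrable_def min_def max_def
          intro: set_integrable_subset[OF int]\<close>)
  then show ?thesis using assms by (simp add: interval_integral_Icc)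
qed

lemma abs_set_integral_mult_nonneg_le:
  fixes h D :: "real \<Rightarrow> real"
  assumes "h \<in> borel_measurable borel" "\<And>t. \<bar>h t\<bar> \<le> C"
    and "D \<in> borel_measurable borel" "\<And>t. t \<in> {a..b} \<Longrightarrow> \<bar>D t\<bar> \<le> B"
    and "\<And>t. t \<in> {a..b} \<Longrightarrow> 0 \<le> D t"
  shows "\<bar>LINT t:{a..b}|lborel. h t * D t\<bar> \<le> C * (LINT t:{a..b}|lborel. D t)"
proof -
  have C: "0 \<le> C" using assms(2)[of 0] by linarith
  have bound: "\<bar>h t * D t\<bar> \<le> C * B" "\<bar>C * D t\<bar> \<le> C * B" if "t \<in> {a..b}" for t
    using assms(2)[of t] assms(4)[OF that] C by (auto simp: abs_mult intro: mult_mono)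
  have "\<bar>LINT t:{a..b}|lborel. h t * D t\<bar> \<le> (LINT t:{a..b}|lborel. \<bar>h t * D t\<bar>)"
    using set_integral_norm_bound[OF set_integrable_Icc_bounded[of _ a b, OF _ bound(1)]] assms(1,3)
    by simp
  also have "\<dots> \<le> (LINT t:{a..b}|lborel. C * D t)"
    by (rule set_integral_Icc_mono[where M="C * B"])
       (use assms bound in \<open>auto simp: abs_mult intro: mult_right_mono\<close>)
  finally show ?thesis by simp
qed

lemma abs_set_integral_mult_deriv_le:
  fixes h D \<Phi> :: "real \<Rightarrow> real"
  assumes [measurable]: "h \<in> borel_measurable borel" and hb: "\<And>t. \<bar>h t\<bar> \<le> C" and "a \<le> b"
    and deriv: "\<And>t. a \<le> t \<Longrightarrow> t \<le> b \<Longrightarrow> (\<Phi> has_real_derivative D t) (at t)"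
    and [measurable]: "D \<in> borel_measurable borel" and cont: "continuous_on {a..b} D"
    and sign: "(\<forall>t\<in>{a..b}. 0 \<le> D t) \<or> (\<forall>t\<in>{a..b}. D t \<le> 0)"
  shows "\<bar>LINT t:{a..b}|lborel. h t * D t\<bar> \<le> C * \<bar>\<Phi> b - \<Phi> a\<bar>"
proof -
  obtain B where B: "\<And>t. t \<in> {a..b} \<Longrightarrow> \<bar>D t\<bar> \<le> B"
    using continuous_on_compact_bound[OF compact_Icc cont] by auto
  have C: "0 \<le> C" using hb[of 0] by linarith
  from sign show ?thesis
  proof
    assume "\<forall>t\<in>{a..b}. 0 \<le> D t"
    then have "\<bar>LINT t:{a..b}|lborel. h t * D t\<bar> \<le> C * (LINT t:{a..b}|lborel. D t)"
      by (intro abs_set_integral_mult_nonneg_le[OF _ hb, where B=B]) (use B in auto)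
    also have "(LINT t:{a..b}|lborel. D t) = \<Phi> b - \<Phi> a"
      by (rule set_integral_Icc_FTC[OF \<open>a \<le> b\<close> deriv cont])
    also have "C * (\<Phi> b - \<Phi> a) \<le> C * \<bar>\<Phi> b - \<Phi> a\<bar>"
      using C by (intro mult_left_mono) auto
    finally show ?thesis by simp
  next
    assume "\<forall>t\<in>{a..b}. D t \<le> 0"
    then have "\<bar>LINT t:{a..b}|lborel. - h t * - D t\<bar> \<le> C * (LINT t:{a..b}|lborel. - D t)"
      by (intro abs_set_integral_mult_nonneg_le[where B=B]) (use hb B in auto)
    also have "(LINT t:{a..b}|lborel. - D t) = - \<Phi> b - - \<Phi> a"
      by (rule set_integral_Icc_FTC[OF \<open>a \<le> b\<close> DERIV_minus[OF deriv]])
         (auto intro: continuous_on_minus[OF cont])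
    also have "C * (- \<Phi> b - - \<Phi> a) \<le> C * \<bar>\<Phi> b - \<Phi> a\<bar>"
      using C by (intro mult_left_mono) auto
    finally show ?thesis by simp
  qed
qed

lemma set_integral_Icc_swap:
  fixes F :: "real \<Rightarrow> real \<Rightarrow> real"
  assumes [measurable]: "case_prod F \<in> borel_measurable (lborel \<Otimes>\<^sub>M lborel)"
    and bound: "\<And>s t. s \<in> {a..b} \<Longrightarrow> t \<in> {c..d} \<Longrightarrow> \<bar>F s t\<bar> \<le> M"
  shows "(LINT s:{a..b}|lborel. LINT t:{c..d}|lborel. F s t) =
         (LINT t:{c..d}|lborel. LINT s:{a..b}|lborel. F s t)"
proof -
  let ?G = "\<lambda>s t. indicator {a..b} s * (indicator {c..d} t * F s t)"
  have "emeasure (lborel \<Otimes>\<^sub>M lborel) ({a..b} \<times> {c..d}) < \<infinity>"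
    by (subst lborel.emeasure_pair_measure_Times)
       (auto simp: emeasure_lborel_Icc_eq ennreal_mult_less_top)
  then have int: "integrable (lborel \<Otimes>\<^sub>M lborel) (case_prod ?G)"
    by (intro integrableI_bounded_set[where A="{a..b} \<times> {c..d}" and B=M])
       (use bound in \<open>auto simp: indicator_def\<close>)
  have "(LINT s:{a..b}|lborel. LINT t:{c..d}|lborel. F s t) = (\<integral>s. \<integral>t. ?G s t \<partial>lborel \<partial>lborel)"
    unfolding set_lebesgue_integral_def by simp
  also have "\<dots> = (\<integral>t. \<integral>s. ?G s t \<partial>lborel \<partial>lborel)"
    using lborel_pair.Fubini_integral[OF int] by simp
  also have "\<dots> = (LINT t:{c..d}|lborel. LINT s:{a..b}|lborel. F s t)"
    unfolding set_lebesgue_integral_def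
    by (intro Bochner_Integration.integral_cong refl) (auto simp: indicator_def)
  finally show ?thesis .
qed

lemma set_integral_triangle_swap:
  fixes h :: "real \<Rightarrow> real" and k :: "real \<Rightarrow> real \<Rightarrow> real"
  assumes [measurable]: "h \<in> borel_measurable borel" and hb: "\<And>t. \<bar>h t\<bar> \<le> C"
    and [measurable]: "case_prod k \<in> borel_measurable (lborel \<Otimes>\<^sub>M lborel)"
    and kb: "\<And>s w. 0 \<le> w \<Longrightarrow> w \<le> s \<Longrightarrow> s \<le> b \<Longrightarrow> \<bar>k s w\<bar> \<le> K"
    and "0 \<le> a" "a \<le> b"
  shows "(LINT s:{a..b}|lborel. LINT w:{0..s}|lborel. h w * k s w) =
         (LINT w:{0..b}|lborel. h w * (LINT s:{max a w..b}|lborel. k s w))"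
proof -
  define F where "F s w = (if w \<le> s then h w * k s w else 0)" for s w
  have "(LINT s:{a..b}|lborel. LINT w:{0..s}|lborel. h w * k s w) =
        (LINT s:{a..b}|lborel. LINT w:{0..b}|lborel. F s w)"
    by (intro set_integral_cong) (auto simp: F_def set_lebesgue_integral_def indicator_def
        intro!: Bochner_Integration.integral_cong)
  also have "\<dots> = (LINT w:{0..b}|lborel. LINT s:{a..b}|lborel. F s w)"
  proof (rule set_integral_Icc_swap[where M="C * K"])
    have "h \<in> borel_measurable lborel" by (simp add: measurable_lborel1)
    then show "case_prod F \<in> borel_measurable (lborel \<Otimes>\<^sub>M lborel)"
      unfolding F_def by measurable
    have "0 \<le> C" "0 \<le> K" using hb[of 0] kb[of 0 0] assms(5,6) by auto
    then show "\<bar>F s w\<bar> \<le> C * K" if "s \<in> {a..b}" "w \<in> {0..b}" for s w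
      using that hb[of w] kb[of w s] by (auto simp: F_def abs_mult intro: mult_mono)
  qed
  also have "\<dots> = (LINT w:{0..b}|lborel. h w * (LINT s:{max a w..b}|lborel. k s w))"
    unfolding set_lebesgue_integral_def
    by (intro Bochner_Integration.integral_cong refl)
       (auto simp: F_def indicator_def simp flip: integral_mult_right_zero
          intro!: Bochner_Integration.integral_cong)
  finally show ?thesis .
qed

lemma Limsup_le_Limsup_of_eventually_le:
  fixes a b :: "'a \<Rightarrow> real"
  assumes "\<And>y e. Limsup F (\<lambda>x. ereal (b x)) < ereal y \<Longrightarrow> 0 < e \<Longrightarrow> eventually (\<lambda>x. a x \<le> y + e) F"
  shows "Limsup F (\<lambda>x. ereal (a x)) \<le> Limsup F (\<lambda>x. ereal (b x))"
proof (rule ereal_le_real)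
  fix z assume z: "Limsup F (\<lambda>x. ereal (b x)) \<le> ereal z"
  show "Limsup F (\<lambda>x. ereal (a x)) \<le> ereal z"
  proof (rule ereal_le_epsilon2)
    fix e :: real assume "0 < e"
    with z have "Limsup F (\<lambda>x. ereal (b x)) < ereal (z + e / 2)"
      by (simp add: order_le_less_trans)
    with \<open>0 < e\<close> have "eventually (\<lambda>x. a x \<le> z + e / 2 + e / 2) F"
      by (intro assms) auto
    then show "Limsup F (\<lambda>x. ereal (a x)) \<le> ereal z + ereal e"
      by (intro Limsup_bounded) (auto elim: eventually_mono)
  qed
qed

lemma Limsup_le_Limsup_add_of_eventually_le:
  fixes a b :: "'a \<Rightarrow> real"
  assumes "eventually (\<lambda>x. a x \<le> b x + c) F"
  shows "Limsup F (\<lambda>x. ereal (a x)) \<le> Limsup F (\<lambda>x. ereal (b x)) + ereal c"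
proof (cases "F = bot")
  case False
  have "Limsup F (\<lambda>x. ereal (a x)) \<le> Limsup F (\<lambda>x. ereal (b x) + ereal c)"
    by (rule Limsup_mono) (use assms in \<open>auto elim: eventually_mono\<close>)
  also have "\<dots> = Limsup F (\<lambda>x. ereal (b x)) + ereal c"
    by (rule Limsup_add_ereal_right) (use False in auto)
  finally show ?thesis .
qed simp

lemma tendsto_Limsup_of_interlaced_bounds:
  fixes E :: "nat \<Rightarrow> ereal" and G :: "real \<Rightarrow> ereal"
  assumes "\<And>k. Limsup at_top G \<le> E k"
    and "eventually (\<lambda>\<theta>. Limsup sequentially E \<le> G \<theta>) at_top"
  shows "E \<longlonglongrightarrow> Limsup at_top G" and "(G \<longlongrightarrow> Limsup at_top G) at_top"
proof -
  have "Limsup at_top G \<le> Liminf sequentially E"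
    using assms(1) by (intro Liminf_bounded) auto
  moreover have "Limsup sequentially E \<le> Liminf at_top G"
    using assms(2) by (rule Liminf_bounded)
  moreover have "Liminf sequentially E \<le> Limsup sequentially E" "Liminf at_top G \<le> Limsup at_top G"
    by (simp_all add: Liminf_le_Limsup)
  ultimately have "Liminf sequentially E = Limsup at_top G" "Limsup sequentially E = Limsup at_top G"
    "Liminf at_top G = Limsup at_top G"
    by (metis order.trans order.antisym)+
  then show "E \<longlonglongrightarrow> Limsup at_top G" "(G \<longlongrightarrow> Limsup at_top G) at_top"
    by (simp_all add: Liminf_eq_Limsup)
qed

section \<open>The operator S and window averages\<close>

text \<open>\<open>S\<close> is \<^const>\<open>Sop\<close> with Borel instead of Lebesgue measure; the two agree on Borel
  functions (\<open>Sop_eq_S\<close>), and the Borel version is the one the integration library supports.\<close>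

definition S :: "(real \<Rightarrow> real) \<Rightarrow> real \<Rightarrow> real" where
  "S h x = exp (- x) * (LINT t:{0..x}|lborel. h t * exp t)"

definition window_avg :: "real \<Rightarrow> (real \<Rightarrow> real) \<Rightarrow> real \<Rightarrow> real" where
  "window_avg \<theta> h x = (1 / \<theta>) * (LINT t:{x..x+\<theta>}|lborel. h t)"

lemma S_measurable [measurable]:
  assumes [measurable]: "h \<in> borel_measurable borel"
  shows "S h \<in> borel_measurable borel"
proof -
  have "(\<lambda>x. LINT t:{0..x}|lborel. h t * exp t) \<in> borel_measurable borel"
    unfolding set_lebesgue_integral_def indicator_def atLeastAtMost_iff
    using assms[unfolded measurable_lborel1[symmetric]] by measurable
  then show ?thesis unfolding S_def by measurable
qed

lemma window_avg_measurable [measurable]: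
  assumes [measurable]: "h \<in> borel_measurable borel"
  shows "window_avg \<theta> h \<in> borel_measurable borel"
proof -
  have "(\<lambda>x. LINT t:{x..x+\<theta>}|lborel. h t) \<in> borel_measurable borel"
    unfolding set_lebesgue_integral_def indicator_def atLeastAtMost_iff
    using assms[unfolded measurable_lborel1[symmetric]] by measurable
  then show ?thesis unfolding window_avg_def by measurable
qed

lemma funpow_S_measurable [measurable]:
  "h \<in> borel_measurable borel \<Longrightarrow> (S ^^ m) h \<in> borel_measurable borel"
  by (induction m) simp_all

lemma S_eq_integral_exp: "S h x = (LINT w:{0..x}|lborel. h w * exp (w - x))"
  unfolding S_def set_integral_mult_right[symmetric]
  by (rule set_integral_cong) (simp add: exp_diff exp_minus field_simps)

lemma abs_mult_exp_le:
  fixes y :: real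
  assumes "\<bar>y\<bar> \<le> C" "w \<le> c"
  shows "\<bar>y * exp (w - c)\<bar> \<le> C"
proof -
  have "\<bar>y * exp (w - c)\<bar> \<le> C * 1"
    unfolding abs_mult using assms by (intro mult_mono) auto
  then show ?thesis by simp
qed

lemma abs_S_le:
  assumes [measurable]: "h \<in> borel_measurable borel" and hb: "\<And>t. \<bar>h t\<bar> \<le> C"
  shows "\<bar>S h x\<bar> \<le> C"
proof (cases "0 \<le> x")
  case True
  have "\<bar>S h x\<bar> \<le> C * (LINT w:{0..x}|lborel. exp (w - x))"
    unfolding S_eq_integral_exp
    by (rule abs_set_integral_mult_nonneg_le[OF _ hb, where B=1]) auto
  also have "(LINT w:{0..x}|lborel. exp (w - x)) = 1 - exp (- x)"
    by (subst set_integral_Icc_FTC[where F="\<lambda>w. exp (w - x)"])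
       (use True in \<open>auto intro!: derivative_eq_intros continuous_intros\<close>)
  also have "C * (1 - exp (- x)) \<le> C * 1"
    using hb[of 0] by (intro mult_left_mono) auto
  finally show ?thesis by simp
next
  case False
  then show ?thesis using hb[of 0] by (simp add: S_def set_lebesgue_integral_def)
qed

lemma abs_funpow_S_le:
  assumes "h \<in> borel_measurable borel" "\<And>t. \<bar>h t\<bar> \<le> C"
  shows "\<bar>(S ^^ m) h x\<bar> \<le> C"
proof (induction m arbitrary: x)
  case (Suc m)
  then show ?case using abs_S_le[of "(S ^^ m) h" C] assms(1) by simp
qed (use assms in simp)

lemma set_integral_S_eq_kernel:
  assumes [measurable]: "h \<in> borel_measurable borel" and hb: "\<And>t. \<bar>h t\<bar> \<le> C"
    and "0 \<le> a" "a \<le> b"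
  shows "(LINT s:{a..b}|lborel. S h s) =
         (LINT w:{0..b}|lborel. h w * (exp (w - max a w) - exp (w - b)))"
proof -
  have "(LINT s:{a..b}|lborel. S h s) =
        (LINT s:{a..b}|lborel. LINT w:{0..s}|lborel. h w * exp (w - s))"
    by (simp add: S_eq_integral_exp)
  also have "\<dots> = (LINT w:{0..b}|lborel. h w * (LINT s:{max a w..b}|lborel. exp (w - s)))"
    by (rule set_integral_triangle_swap[where C=C and K=1]) (use hb assms(3,4) in auto)
  also have "\<dots> = (LINT w:{0..b}|lborel. h w * (exp (w - max a w) - exp (w - b)))"
  proof (rule set_integral_cong)
    fix w assume "w \<in> {0..b}"
    then have "(LINT s:{max a w..b}|lborel. exp (w - s)) = - exp (w - b) - - exp (w - max a w)"
      by (intro set_integral_Icc_FTC)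
         (use assms(4) in \<open>auto intro!: derivative_eq_intros continuous_intros\<close>)
    then show "h w * (LINT s:{max a w..b}|lborel. exp (w - s)) =
               h w * (exp (w - max a w) - exp (w - b))"
      by simp
  qed
  finally show ?thesis .
qed

text \<open>This is the integrated form of the differential equation \<open>(S h)' = h - S h\<close>.\<close>

lemma set_integral_S:
  assumes [measurable]: "h \<in> borel_measurable borel" and hb: "\<And>t. \<bar>h t\<bar> \<le> C"
    and ab: "0 \<le> a" "a \<le> b"
  shows "(LINT s:{a..b}|lborel. S h s) = S h a + (LINT s:{a..b}|lborel. h s) - S h b"
proof -
  let ?k = "\<lambda>w. h w * exp (w - max a w)"
  have kb: "\<bar>?k w\<bar> \<le> C" "\<bar>h w * exp (w - b)\<bar> \<le> C" if "w \<le> b" for w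
    using abs_mult_exp_le[OF hb] that by auto
  have "(LINT s:{a..b}|lborel. S h s) = (LINT w:{0..b}|lborel. ?k w) - S h b"
    unfolding set_integral_S_eq_kernel[OF assms] S_eq_integral_exp[of h b] right_diff_distrib
    by (intro set_integral_diff set_integrable_Icc_bounded[where M=C]) (use kb in auto)
  also have "(LINT w:{0..b}|lborel. ?k w) = (LINT w:{0..a}|lborel. ?k w) + (LINT w:{a..b}|lborel. ?k w)"
    by (rule set_integral_Icc_split[where M=C]) (use kb ab in auto)
  also have "(LINT w:{0..a}|lborel. ?k w) = S h a"
    unfolding S_eq_integral_exp by (rule set_integral_cong) auto
  also have "(LINT w:{a..b}|lborel. ?k w) = (LINT w:{a..b}|lborel. h w)"
    by (rule set_integral_cong) auto
  finally show ?thesis by simp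
qed

lemma abs_S_sub_le_lipschitz:
  assumes [measurable]: "u \<in> borel_measurable borel" and ub: "\<And>t. \<bar>u t\<bar> \<le> C"
    and "0 \<le> a" "a \<le> b" and close: "\<And>s. s \<in> {a..b} \<Longrightarrow> \<bar>u s - S u s\<bar> \<le> L"
  shows "\<bar>S u b - S u a\<bar> \<le> L * (b - a)"
proof -
  have "S u b - S u a = (LINT s:{a..b}|lborel. u s) - (LINT s:{a..b}|lborel. S u s)"
    using set_integral_S[OF _ ub assms(3,4)] by simp
  also have "\<dots> = (LINT s:{a..b}|lborel. u s - S u s)"
    by (intro set_integral_diff(2)[symmetric] set_integrable_Icc_bounded[where M=C])
       (use ub abs_S_le[OF _ ub] in auto)
  finally show ?thesis
    using abs_set_integral_Icc_le[of "\<lambda>s. u s - S u s" a b L] close assms(4) by simp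
qed

lemma abs_window_avg_le:
  assumes "h \<in> borel_measurable borel" "\<And>t. \<bar>h t\<bar> \<le> C" "0 < \<theta>"
  shows "\<bar>window_avg \<theta> h x\<bar> \<le> C"
proof -
  have "\<bar>LINT t:{x..x+\<theta>}|lborel. h t\<bar> \<le> C * (x + \<theta> - x)"
    by (rule abs_set_integral_Icc_le) (use assms in auto)
  then show ?thesis using assms(3) by (simp add: window_avg_def abs_mult field_simps)
qed

lemma abs_window_avg_sub_le:
  assumes [measurable]: "u \<in> borel_measurable borel" and "0 < \<theta>"
    and close: "\<And>t. t \<in> {x..x+\<theta>} \<Longrightarrow> \<bar>u t - u x\<bar> \<le> \<epsilon>"
  shows "\<bar>window_avg \<theta> u x - u x\<bar> \<le> \<epsilon>"
proof -
  have "set_integrable lborel {x..x+\<theta>} u"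
    by (rule set_integrable_Icc_bounded[where M="\<bar>u x\<bar> + \<epsilon>"]) (use close in force)+
  moreover have "set_integrable lborel {x..x+\<theta>} (\<lambda>_. u x)"
    by (rule set_integrable_Icc_bounded[where M="\<bar>u x\<bar>"]) auto
  ultimately have "(LINT t:{x..x+\<theta>}|lborel. u t - u x) = (LINT t:{x..x+\<theta>}|lborel. u t) - u x * \<theta>"
    using \<open>0 < \<theta>\<close> by (simp add: set_integral_diff(2) set_integral_Icc_const)
  moreover have "\<bar>LINT t:{x..x+\<theta>}|lborel. u t - u x\<bar> \<le> \<epsilon> * (x + \<theta> - x)"
    by (rule abs_set_integral_Icc_le) (use close \<open>0 < \<theta>\<close> in auto)
  ultimately have "\<bar>(LINT t:{x..x+\<theta>}|lborel. u t) - u x * \<theta>\<bar> \<le> \<epsilon> * \<theta>" by simp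
  then show ?thesis
    using \<open>0 < \<theta>\<close> by (simp add: window_avg_def divide_simps abs_divide abs_mult)
qed

lemma abs_window_avg_S_sub_le:
  assumes hm [measurable]: "h \<in> borel_measurable borel" and hb: "\<And>t. \<bar>h t\<bar> \<le> C"
    and "0 < \<theta>" "0 \<le> x"
  shows "\<bar>window_avg \<theta> (S h) x - window_avg \<theta> h x\<bar> \<le> 2 * C / \<theta>"
proof -
  have "window_avg \<theta> (S h) x - window_avg \<theta> h x = (S h x - S h (x + \<theta>)) / \<theta>"
    using set_integral_S[OF hm hb, where a=x and b="x + \<theta>"] assms(3,4)
    by (simp add: window_avg_def diff_divide_distrib[symmetric])
  moreover have "\<bar>S h x - S h (x + \<theta>)\<bar> \<le> 2 * C"
    using abs_S_le[OF hm hb, where x=x] abs_S_le[OF hm hb, where x="x + \<theta>"] by linarith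
  ultimately show ?thesis
    using \<open>0 < \<theta>\<close> by (simp add: abs_divide divide_right_mono)
qed

lemma S_window_avg_eq_kernel:
  assumes hm [measurable]: "h \<in> borel_measurable borel" and hb: "\<And>t. \<bar>h t\<bar> \<le> C"
    and "0 \<le> x" "0 < \<theta>"
  shows "\<theta> * S (window_avg \<theta> h) x =
         (LINT w:{0..x+\<theta>}|lborel. h w * (exp (w - max x w) - exp (max 0 (w - \<theta>) - x)))"
proof -
  define F where "F t w = (if t \<le> w \<and> w \<le> t + \<theta> then h w * exp (t - x) else 0)" for t w
  have "\<theta> * S (window_avg \<theta> h) x = (LINT t:{0..x}|lborel. \<theta> * (window_avg \<theta> h t * exp (t - x)))"
    by (simp add: S_eq_integral_exp)
  also have "\<dots> = (LINT t:{0..x}|lborel. LINT w:{0..x+\<theta>}|lborel. F t w)"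
  proof (rule set_integral_cong)
    fix t assume t: "t \<in> {0..x}"
    have "\<theta> * (window_avg \<theta> h t * exp (t - x)) = (LINT w:{t..t+\<theta>}|lborel. h w * exp (t - x))"
      using \<open>0 < \<theta>\<close> by (simp add: window_avg_def)
    also have "\<dots> = (LINT w:{0..x+\<theta>}|lborel. F t w)"
      unfolding set_lebesgue_integral_def
      by (rule Bochner_Integration.integral_cong[OF refl]) (use t in \<open>auto simp: F_def indicator_def\<close>)
    finally show "\<theta> * (window_avg \<theta> h t * exp (t - x)) = (LINT w:{0..x+\<theta>}|lborel. F t w)" .
  qed
  also have "\<dots> = (LINT w:{0..x+\<theta>}|lborel. LINT t:{0..x}|lborel. F t w)"
  proof (rule set_integral_Icc_swap[where M=C])
    have "h \<in> borel_measurable lborel" by (simp add: measurable_lborel1)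
    then show "case_prod F \<in> borel_measurable (lborel \<Otimes>\<^sub>M lborel)"
      unfolding F_def by measurable
    show "\<bar>F t w\<bar> \<le> C" if "t \<in> {0..x}" "w \<in> {0..x+\<theta>}" for t w
      using that abs_mult_exp_le[OF hb, of t x w] hb[of 0] by (auto simp: F_def)
  qed
  also have "\<dots> = (LINT w:{0..x+\<theta>}|lborel. h w * (exp (w - max x w) - exp (max 0 (w - \<theta>) - x)))"
  proof (rule set_integral_cong)
    fix w assume w: "w \<in> {0..x+\<theta>}"
    have "(LINT t:{0..x}|lborel. F t w) = (LINT t:{max 0 (w - \<theta>)..min x w}|lborel. h w * exp (t - x))"
      unfolding set_lebesgue_integral_def
      by (rule Bochner_Integration.integral_cong[OF refl]) (auto simp: F_def indicator_def)
    also have "\<dots> = h w * (LINT t:{max 0 (w - \<theta>)..min x w}|lborel. exp (t - x))"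
      by simp
    also have "(LINT t:{max 0 (w - \<theta>)..min x w}|lborel. exp (t - x)) =
               exp (min x w - x) - exp (max 0 (w - \<theta>) - x)"
      by (rule set_integral_Icc_FTC)
         (use w assms(3,4) in \<open>auto intro!: derivative_eq_intros continuous_intros\<close>)
    also have "min x w - x = w - max x w" by linarith
    finally show "(LINT t:{0..x}|lborel. F t w) = h w * (exp (w - max x w) - exp (max 0 (w - \<theta>) - x))" .
  qed
  finally show ?thesis .
qed

lemma window_avg_S_sub_S_window_avg_eq:
  assumes hm [measurable]: "h \<in> borel_measurable borel" and hb: "\<And>t. \<bar>h t\<bar> \<le> C"
    and "0 \<le> x" "0 < \<theta>"
  shows "\<theta> * (window_avg \<theta> (S h) x - S (window_avg \<theta> h) x) =
         (LINT w:{0..x+\<theta>}|lborel. h w * (exp (max 0 (w - \<theta>) - x) - exp (w - (x + \<theta>))))"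
proof -
  have kb: "\<bar>h w * (a - b)\<bar> \<le> C" if "0 \<le> a" "a \<le> 1" "0 \<le> b" "b \<le> 1" for w a b :: real
    unfolding abs_mult using that hb[of w] mult_mono[of "\<bar>h w\<bar>" C "\<bar>a - b\<bar>" 1] by auto
  have "\<theta> * window_avg \<theta> (S h) x - \<theta> * S (window_avg \<theta> h) x =
        (LINT w:{0..x+\<theta>}|lborel. h w * (exp (w - max x w) - exp (w - (x + \<theta>)))) -
        (LINT w:{0..x+\<theta>}|lborel. h w * (exp (w - max x w) - exp (max 0 (w - \<theta>) - x)))"
    unfolding S_window_avg_eq_kernel[OF hm hb assms(3,4)]
    using set_integral_S_eq_kernel[OF hm hb, where a=x and b="x + \<theta>"] assms(3,4)
    by (simp add: window_avg_def)
  also have "\<dots> = (LINT w:{0..x+\<theta>}|lborel. h w * (exp (w - max x w) - exp (w - (x + \<theta>))) -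
                                           h w * (exp (w - max x w) - exp (max 0 (w - \<theta>) - x)))"
    by (rule set_integral_diff(2)[symmetric]; rule set_integrable_Icc_bounded[where M=C])
       (use assms(3) in \<open>auto intro!: kb simp: max_def\<close>)
  also have "\<dots> = (LINT w:{0..x+\<theta>}|lborel. h w * (exp (max 0 (w - \<theta>) - x) - exp (w - (x + \<theta>))))"
    by (rule set_integral_cong) (simp add: algebra_simps)
  finally show ?thesis by (simp add: right_diff_distrib)
qed

text \<open>Averaging over a window of length \<open>\<theta>\<close> and applying \<open>S\<close> commute up to the contribution
  of \<open>h\<close> on \<open>[0, \<theta>]\<close>, which \<open>S\<close> damps by \<open>exp (- x)\<close>.\<close>

lemma abs_window_avg_S_sub_S_window_avg_le:
  assumes hm [measurable]: "h \<in> borel_measurable borel" and hb: "\<And>t. \<bar>h t\<bar> \<le> C"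
    and "0 \<le> x" "0 < \<theta>"
  shows "\<bar>window_avg \<theta> (S h) x - S (window_avg \<theta> h) x\<bar> \<le> C * exp (- x)"
proof -
  have C: "0 \<le> C" using hb[of 0] by linarith
  define E where "E w = exp (max 0 (w - \<theta>) - x) - exp (w - (x + \<theta>))" for w
  have E_measurable [measurable]: "E \<in> borel_measurable borel" unfolding E_def by measurable
  have E_nonneg: "0 \<le> E w" for w unfolding E_def by simp
  have E_le: "E w \<le> exp (- x)" for w
    by (cases "w \<le> \<theta>") (simp_all add: E_def max_def algebra_simps)
  have E_zero: "E w = 0" if "\<theta> \<le> w" for w using that by (simp add: E_def max_def algebra_simps)
  have E_le_1: "E w \<le> 1" for w
    using E_le[of w] exp_le_one_iff[of "- x"] \<open>0 \<le> x\<close> by linarith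
  have "\<bar>LINT w:{0..x+\<theta>}|lborel. h w * E w\<bar> \<le> C * (LINT w:{0..x+\<theta>}|lborel. E w)"
    by (rule abs_set_integral_mult_nonneg_le[OF hm hb, where B=1]) (simp_all add: E_le_1 E_nonneg)
  also have "(LINT w:{0..x+\<theta>}|lborel. E w) = (LINT w:{0..\<theta>}|lborel. E w) + (LINT w:{\<theta>..x+\<theta>}|lborel. E w)"
    by (rule set_integral_Icc_split[where M=1]) (use E_le_1 E_nonneg assms(3,4) in auto)
  also have "(LINT w:{\<theta>..x+\<theta>}|lborel. E w) = 0"
    using set_integral_cong[of "{\<theta>..x+\<theta>}" E "\<lambda>_. 0" lborel] E_zero by simp
  also have "(LINT w:{0..\<theta>}|lborel. E w) \<le> exp (- x) * \<theta>"
    using abs_set_integral_Icc_le[of E 0 \<theta> "exp (- x)"] E_nonneg E_le assms(4) by auto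
  finally have "\<bar>\<theta> * (window_avg \<theta> (S h) x - S (window_avg \<theta> h) x)\<bar> \<le> \<theta> * (C * exp (- x))"
    unfolding window_avg_S_sub_S_window_avg_eq[OF hm hb assms(3,4)] E_def[symmetric]
    using mult_right_mono[OF _ C] by (simp add: mult_ac)
  then show ?thesis using assms(4) by (simp add: abs_mult)
qed

section \<open>The Erlang kernels of the iterates of S\<close>

definition erlang :: "nat \<Rightarrow> real \<Rightarrow> real" where
  "erlang n r = r ^ n * exp (- r) / fact n"

lemma erlang_measurable [measurable]: "(\<lambda>w. erlang n (x - w)) \<in> borel_measurable borel"
  unfolding erlang_def by measurable

lemma continuous_on_erlang [continuous_intros]: "continuous_on A (\<lambda>w. erlang n (x - w))"
  unfolding erlang_def by (intro continuous_intros) auto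

lemma erlang_nonneg: "0 \<le> r \<Longrightarrow> 0 \<le> erlang n r"
  by (simp add: erlang_def)

lemma erlang_le_power:
  assumes "0 \<le> r" "r \<le> x"
  shows "erlang n r \<le> x ^ n / fact n"
proof -
  have "r ^ n * exp (- r) / fact n \<le> x ^ n * 1 / fact n"
    using assms by (intro divide_right_mono mult_mono power_mono) auto
  then show ?thesis by (simp add: erlang_def)
qed

lemma erlang_Suc: "erlang (Suc n) r = erlang n r * (r / real (Suc n))"
  by (simp add: erlang_def field_simps)

lemma has_real_derivative_erlang:
  "((\<lambda>w. erlang (Suc n) (x - w)) has_real_derivative erlang (Suc n) (x - w) - erlang n (x - w)) (at w)"
  unfolding erlang_def
  by (rule derivative_eq_intros refl | simp)+ (simp add: diff_divide_distrib)

lemma set_integral_erlang_exp: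
  assumes "w \<le> x"
  shows "(LINT s:{w..x}|lborel. erlang n (s - w) * exp (s - x)) = erlang (Suc n) (x - w)"
proof -
  define F where "F s = (s - w) ^ Suc n * (exp (w - x) / fact (Suc n))" for s
  have "(F has_real_derivative erlang n (s - w) * exp (s - x)) (at s)" for s
  proof -
    have "(F has_real_derivative (Suc n * (s - w) ^ n) * (exp (w - x) / fact (Suc n))) (at s)"
      unfolding F_def by (rule derivative_eq_intros refl | simp)+
    moreover have "exp (w - x) = exp (- (s - w)) * exp (s - x)"
      by (simp flip: exp_add)
    then have "(Suc n * (s - w) ^ n) * (exp (w - x) / fact (Suc n)) = erlang n (s - w) * exp (s - x)"
      by (simp add: erlang_def fact_Suc del: of_nat_Suc)
    ultimately show ?thesis by simp
  qed
  then have "(LINT s:{w..x}|lborel. erlang n (s - w) * exp (s - x)) = F x - F w"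
    by (intro set_integral_Icc_FTC assms) (auto simp: erlang_def intro!: continuous_intros)
  also have "F x - F w = erlang (Suc n) (x - w)"
    by (simp add: F_def erlang_def exp_minus)
  finally show ?thesis .
qed

text \<open>\<open>S\<close> is convolution with \<open>exp (- r)\<close> on \<open>[0, x]\<close>, so \<open>S ^^ Suc n\<close> is convolution with
  the \<open>Suc n\<close>-fold convolution power of that kernel, the Erlang density \<open>erlang n\<close>.\<close>

lemma funpow_S_eq_integral_erlang:
  assumes [measurable]: "h \<in> borel_measurable borel" and hb: "\<And>t. \<bar>h t\<bar> \<le> C" and "0 \<le> x"
  shows "(S ^^ Suc n) h x = (LINT w:{0..x}|lborel. h w * erlang n (x - w))"
  using \<open>0 \<le> x\<close>
proof (induction n arbitrary: x)
  case 0
  show ?case by (simp add: S_eq_integral_exp erlang_def)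
next
  case (Suc n)
  have "(S ^^ Suc (Suc n)) h x = (LINT s:{0..x}|lborel. exp (s - x) * (S ^^ Suc n) h s)"
    by (simp add: S_eq_integral_exp mult.commute)
  also have "\<dots> = (LINT s:{0..x}|lborel. LINT w:{0..s}|lborel. h w * (erlang n (s - w) * exp (s - x)))"
  proof (rule set_integral_cong)
    fix s assume "s \<in> {0..x}"
    then show "exp (s - x) * (S ^^ Suc n) h s =
               (LINT w:{0..s}|lborel. h w * (erlang n (s - w) * exp (s - x)))"
      by (simp add: Suc.IH ac_simps del: funpow.simps flip: set_integral_mult_right)
  qed
  also have "\<dots> = (LINT w:{0..x}|lborel. h w * (LINT s:{max 0 w..x}|lborel. erlang n (s - w) * exp (s - x)))"
  proof (rule set_integral_triangle_swap[where C=C and K="x ^ n / fact n"])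
    show "(\<lambda>(s, w). erlang n (s - w) * exp (s - x)) \<in> borel_measurable (lborel \<Otimes>\<^sub>M lborel)"
      unfolding erlang_def by measurable
    fix s w assume "0 \<le> w" "w \<le> s" "s \<le> x"
    then have "\<bar>erlang n (s - w) * exp (s - x)\<bar> \<le> x ^ n / fact n * 1"
      unfolding abs_mult
      by (intro mult_mono) (auto simp: erlang_nonneg erlang_le_power)
    then show "\<bar>erlang n (s - w) * exp (s - x)\<bar> \<le> x ^ n / fact n" by simp
  qed (use hb Suc.prems in auto)
  also have "\<dots> = (LINT w:{0..x}|lborel. h w * erlang (Suc n) (x - w))"
    by (rule set_integral_cong) (simp add: set_integral_erlang_exp)
  finally show ?case .
qed

lemma erlang_le_mode:
  assumes "0 \<le> r"
  shows "erlang n r \<le> erlang n n"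
proof (cases "n = 0")
  case True
  then show ?thesis using assms by (simp add: erlang_def)
next
  case False
  define t where "t = r / n"
  have t: "0 \<le> t" "r = n * t" using assms False by (auto simp: t_def)
  have "t * exp (- t) \<le> exp (t - 1) * exp (- t)"
    using exp_ge_add_one_self[of "t - 1"] by (intro mult_right_mono) auto
  then have te: "t * exp (- t) \<le> exp (- 1)" by (simp flip: exp_add)
  have "r ^ n * exp (- r) = n ^ n * (t * exp (- t)) ^ n"
    by (simp add: t(2) power_mult_distrib mult_ac flip: exp_of_nat_mult)
  also have "\<dots> \<le> n ^ n * exp (- 1) ^ n"
    using te t(1) by (intro mult_left_mono power_mono) auto
  also have "\<dots> = n ^ n * exp (- n)"
    by (simp flip: exp_of_nat_mult)
  finally show ?thesis
    unfolding erlang_def by (intro divide_right_mono) auto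
qed

lemma erlang_ge_near_mode:
  assumes n: "4 \<le> n" and w: "0 \<le> w" "w \<le> sqrt n"
  shows "erlang n n * exp (- 2) \<le> erlang n (n - w)"
proof -
  define N where "N = real n"
  have N: "4 \<le> N" using n by (simp add: N_def)
  have "2 * sqrt N \<le> sqrt N * sqrt N"
    using real_le_rsqrt[of 2 N] N by (intro mult_right_mono) auto
  then have sN: "sqrt N \<le> N / 2" using N by simp
  define t where "t = w / N"
  have t: "0 \<le> t" "t \<le> 1/2" using w sN N by (auto simp: t_def N_def field_simps)
  have wt: "w = N * t" using N by (simp add: t_def)
  have "w\<^sup>2 \<le> N" using w N real_sqrt_le_iff[of "w\<^sup>2" N] by (simp add: N_def)
  then have tt: "N * t\<^sup>2 \<le> 1" using N by (simp add: wt power2_eq_square field_simps)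
  have "exp (N * (- t - 2 * t\<^sup>2)) \<le> exp (N * ln (1 - t))"
    using ln_one_minus_pos_lower_bound[of t] t N by (simp add: mult_left_mono)
  also have "\<dots> = (1 - t) ^ n"
    using t by (simp add: N_def exp_of_nat_mult)
  finally have p: "exp (N * (- t - 2 * t\<^sup>2)) \<le> (1 - t) ^ n" .
  have "exp (- 2) * exp (- N) \<le> exp (N * (- t - 2 * t\<^sup>2)) * exp (- (N - w))"
    using tt by (simp add: wt algebra_simps flip: exp_add)
  also have "\<dots> \<le> (1 - t) ^ n * exp (- (N - w))"
    using p by (intro mult_right_mono) auto
  finally have "N ^ n * (exp (- N) * exp (- 2)) \<le> N ^ n * ((1 - t) ^ n * exp (- (N - w)))"
    using N by (intro mult_left_mono) (auto simp: mult.commute)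
  also have "\<dots> = (N - w) ^ n * exp (- (N - w))"
    using N by (simp add: wt power_mult_distrib[symmetric] algebra_simps)
  finally show ?thesis
    unfolding erlang_def N_def by (simp add: divide_right_mono mult_ac)
qed

lemma set_integral_erlang_le_1:
  assumes "0 \<le> x"
  shows "(LINT w:{0..x}|lborel. erlang n (x - w)) \<le> 1"
proof -
  have "(S ^^ Suc n) (\<lambda>_. 1) x = (LINT w:{0..x}|lborel. 1 * erlang n (x - w))"
    by (rule funpow_S_eq_integral_erlang[where C=1]) (use assms in auto)
  moreover have "\<bar>(S ^^ Suc n) (\<lambda>_. 1) x\<bar> \<le> 1"
    by (rule abs_funpow_S_le) auto
  ultimately show ?thesis by (simp del: funpow.simps)
qed

lemma erlang_mode_le:
  assumes n: "4 \<le> n"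
  shows "erlang n n \<le> exp 2 / sqrt n"
proof -
  define L where "L = sqrt n"
  define M where "M = max (n ^ n / fact n) (erlang n n * exp (- 2))"
  have L: "0 < L" "L \<le> n"
    using n real_le_lsqrt[of n n] by (auto simp: L_def power2_eq_square)
  have bound: "\<bar>erlang n (n - w)\<bar> \<le> M" if "w \<in> {0..n}" for w :: real
    using that erlang_le_power[of "n - w" n n] erlang_nonneg[of "n - w" n] by (auto simp: M_def)
  have nonneg: "0 \<le> (LINT w:{L..n}|lborel. erlang n (n - w))"
    unfolding set_lebesgue_integral_def
    by (rule Bochner_Integration.integral_nonneg) (simp add: erlang_nonneg split: split_indicator)
  have "(LINT w:{0..L}|lborel. erlang n n * exp (- 2)) \<le> (LINT w:{0..L}|lborel. erlang n (n - w))"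
  proof (rule set_integral_Icc_mono[where M=M])
    fix w assume w: "w \<in> {0..L}"
    then show "\<bar>erlang n (n - w)\<bar> \<le> M"
      using bound[of w] L by auto
    show "erlang n n * exp (- 2) \<le> erlang n (n - w)"
      using w erlang_ge_near_mode[of n w] n by (auto simp: L_def)
  qed (auto simp: M_def erlang_nonneg)
  also have "\<dots> \<le> (LINT w:{0..L}|lborel. erlang n (n - w)) + (LINT w:{L..n}|lborel. erlang n (n - w))"
    using nonneg by simp
  also have "\<dots> = (LINT w:{0..n}|lborel. erlang n (n - w))"
    by (rule set_integral_Icc_split[symmetric, where M=M]) (use bound L in auto)
  also have "\<dots> \<le> 1"
    by (rule set_integral_erlang_le_1) simp
  finally have "erlang n n * exp (- 2) * L \<le> 1"
    using L by (simp add: set_integral_Icc_const mult_ac)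
  then show ?thesis
    using L by (simp add: L_def exp_minus field_simps)
qed

lemma erlang_mode_tendsto_0: "(\<lambda>n. erlang n n) \<longlonglongrightarrow> 0"
proof (rule tendsto_sandwich[where f="\<lambda>_. 0" and h="\<lambda>n. exp 2 / sqrt (real n)"])
  show "eventually (\<lambda>n. erlang n n \<le> exp 2 / sqrt n) sequentially"
    using eventually_ge_at_top[of 4] by eventually_elim (simp add: erlang_mode_le)
  show "(\<lambda>n. exp 2 / sqrt (real n)) \<longlonglongrightarrow> 0" by real_asymp
qed (auto simp: erlang_nonneg)

lemma set_integrable_mult_erlang:
  assumes "h \<in> borel_measurable borel" and hb: "\<And>t. \<bar>h t\<bar> \<le> C"
  shows "set_integrable lborel {0..x} (\<lambda>w. h w * erlang n (x - w))"
proof (rule set_integrable_Icc_bounded[where M="C * (x ^ n / fact n)"])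
  fix w assume "w \<in> {0..x}"
  then show "\<bar>h w * erlang n (x - w)\<bar> \<le> C * (x ^ n / fact n)"
    unfolding abs_mult using hb[of w] erlang_nonneg[of "x - w" n] erlang_le_power[of "x - w" x n]
    by (intro mult_mono) auto
qed (use assms in simp)

lemma funpow_S_Suc_diff_eq_integral:
  assumes hm [measurable]: "h \<in> borel_measurable borel" and hb: "\<And>t. \<bar>h t\<bar> \<le> C" and "0 \<le> x"
  shows "(S ^^ Suc (Suc n)) h x - (S ^^ Suc n) h x =
         (LINT w:{0..x}|lborel. h w * (erlang (Suc n) (x - w) - erlang n (x - w)))"
  unfolding funpow_S_eq_integral_erlang[OF hm hb \<open>0 \<le> x\<close>] right_diff_distrib
  by (intro set_integral_diff(2)[symmetric] set_integrable_mult_erlang[OF hm hb])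

text \<open>The kernel difference is the derivative of \<open>erlang (Suc n) (x - w)\<close> in \<open>w\<close> and changes sign
  once, at \<open>w = x - Suc n\<close>; the mode bound of \<open>erlang (Suc n)\<close> controls both monotone pieces.\<close>

lemma abs_funpow_S_Suc_diff_le:
  assumes hm [measurable]: "h \<in> borel_measurable borel" and hb: "\<And>t. \<bar>h t\<bar> \<le> C" and "0 \<le> x"
  shows "\<bar>(S ^^ Suc (Suc n)) h x - (S ^^ Suc n) h x\<bar> \<le> 2 * C * erlang (Suc n) (Suc n)"
proof -
  define \<Phi> where "\<Phi> w = erlang (Suc n) (x - w)" for w
  define D where "D w = erlang (Suc n) (x - w) - erlang n (x - w)" for w
  define c where "c = max 0 (x - Suc n)"
  have c: "0 \<le> c" "c \<le> x" using \<open>0 \<le> x\<close> by (auto simp: c_def)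
  have [measurable]: "D \<in> borel_measurable borel" unfolding D_def by measurable
  have cont: "continuous_on A D" for A unfolding D_def by (intro continuous_intros)
  have deriv: "(\<Phi> has_real_derivative D w) (at w)" for w
    unfolding \<Phi>_def D_def by (rule has_real_derivative_erlang)
  have D_eq: "D w = erlang n (x - w) * ((x - w) / Suc n - 1)" for w
    unfolding D_def erlang_Suc by (simp add: algebra_simps)
  have D_nonneg: "0 \<le> D w" if "Suc n \<le> x - w" for w
    unfolding D_eq using that by (intro mult_nonneg_nonneg erlang_nonneg) (auto simp: field_simps)
  have D_nonpos: "D w \<le> 0" if "0 \<le> x - w" "x - w \<le> Suc n" for w
    unfolding D_eq using that erlang_nonneg[of "x - w" n]
    by (intro mult_nonneg_nonpos) (auto simp: field_simps)
  have \<Phi>: "0 \<le> \<Phi> w" "\<Phi> w \<le> erlang (Suc n) (Suc n)" if "w \<le> x" for w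
    using that erlang_nonneg[of "x - w"] erlang_le_mode[of "x - w" "Suc n"] by (auto simp: \<Phi>_def)
  obtain B where B: "\<And>w. w \<in> {0..x} \<Longrightarrow> \<bar>D w\<bar> \<le> B"
    using continuous_on_compact_bound[OF compact_Icc cont, of 0 x] by auto
  have hD: "\<bar>h w * D w\<bar> \<le> C * B" if "w \<in> {0..x}" for w
    unfolding abs_mult using hb[of w] B[OF that] by (intro mult_mono) auto
  have C: "0 \<le> C" using hb[of 0] by linarith
  have "\<bar>(S ^^ Suc (Suc n)) h x - (S ^^ Suc n) h x\<bar> = \<bar>LINT w:{0..x}|lborel. h w * D w\<bar>"
    unfolding D_def funpow_S_Suc_diff_eq_integral[OF hm hb \<open>0 \<le> x\<close>] ..
  also have "\<dots> = \<bar>(LINT w:{0..c}|lborel. h w * D w) + (LINT w:{c..x}|lborel. h w * D w)\<bar>"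
    by (subst set_integral_Icc_split[where M="C * B"]) (use hD c in auto)
  also have "\<dots> \<le> \<bar>LINT w:{0..c}|lborel. h w * D w\<bar> + \<bar>LINT w:{c..x}|lborel. h w * D w\<bar>"
    by (rule abs_triangle_ineq)
  also have "\<dots> \<le> C * \<bar>\<Phi> c - \<Phi> 0\<bar> + C * \<bar>\<Phi> x - \<Phi> c\<bar>"
  proof (intro add_mono abs_set_integral_mult_deriv_le[OF _ hb _ deriv _ cont])
    show "(\<forall>w\<in>{0..c}. 0 \<le> D w) \<or> (\<forall>w\<in>{0..c}. D w \<le> 0)"
      using D_nonneg D_nonpos \<open>0 \<le> x\<close> by (cases "Suc n \<le> x") (auto simp: c_def)
    show "(\<forall>w\<in>{c..x}. 0 \<le> D w) \<or> (\<forall>w\<in>{c..x}. D w \<le> 0)"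
      using D_nonpos c by (auto simp: c_def)
  qed (use c in auto)
  also have "\<dots> \<le> C * erlang (Suc n) (Suc n) + C * erlang (Suc n) (Suc n)"
    using \<Phi>[of 0] \<Phi>[of c] \<Phi>[of x] c C by (intro add_mono mult_left_mono) auto
  finally show ?thesis by simp
qed

lemma abs_funpow_S_sub_window_avg_le:
  assumes hm [measurable]: "h \<in> borel_measurable borel" and hb: "\<And>t. \<bar>h t\<bar> \<le> C"
    and "0 \<le> x" "0 < \<theta>"
  shows "\<bar>window_avg \<theta> ((S ^^ Suc (Suc n)) h) x - (S ^^ Suc (Suc n)) h x\<bar>
           \<le> \<theta> * (2 * C * erlang (Suc n) (Suc n))"
proof (rule abs_window_avg_sub_le)
  fix t assume t: "t \<in> {x..x+\<theta>}"
  have "\<bar>S ((S ^^ Suc n) h) t - S ((S ^^ Suc n) h) x\<bar> \<le> 2 * C * erlang (Suc n) (Suc n) * (t - x)"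
  proof (rule abs_S_sub_le_lipschitz[OF _ abs_funpow_S_le[OF hm hb]])
    show "\<bar>(S ^^ Suc n) h s - S ((S ^^ Suc n) h) s\<bar> \<le> 2 * C * erlang (Suc n) (Suc n)"
      if "s \<in> {x..t}" for s
      using abs_funpow_S_Suc_diff_le[OF hm hb, where x=s and n=n] that \<open>0 \<le> x\<close> by (simp add: abs_minus_commute)
  qed (use t \<open>0 \<le> x\<close> in auto)
  also have "\<dots> \<le> 2 * C * erlang (Suc n) (Suc n) * \<theta>"
    using t hb[of 0] erlang_nonneg[of "Suc n" "Suc n"] by (intro mult_left_mono) auto
  finally show "\<bar>(S ^^ Suc (Suc n)) h t - (S ^^ Suc (Suc n)) h x\<bar> \<le> \<theta> * (2 * C * erlang (Suc n) (Suc n))"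
    by (simp add: mult.commute)
qed (use assms in auto)

section \<open>Comparing the upper limits\<close>

lemma S_le_of_le_beyond:
  assumes hm [measurable]: "h \<in> borel_measurable borel" and hb: "\<And>t. \<bar>h t\<bar> \<le> C"
    and X: "0 \<le> X" "X \<le> x" and le: "\<And>t. X \<le> t \<Longrightarrow> h t \<le> y"
  shows "S h x \<le> y + (C * X + \<bar>y\<bar>) * exp (X - x)"
proof -
  have hx: "\<bar>h w * exp (w - x)\<bar> \<le> C" if "w \<le> x" for w by (rule abs_mult_exp_le[OF hb that])
  have "S h x = (LINT w:{0..X}|lborel. h w * exp (w - x)) + (LINT w:{X..x}|lborel. h w * exp (w - x))"
    unfolding S_eq_integral_exp by (rule set_integral_Icc_split[where M=C]) (use hx X in auto)
  moreover have "\<bar>LINT w:{0..X}|lborel. h w * exp (w - x)\<bar> \<le> C * exp (X - x) * (X - 0)"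
  proof (rule abs_set_integral_Icc_le)
    fix w assume "w \<in> {0..X}"
    then show "\<bar>h w * exp (w - x)\<bar> \<le> C * exp (X - x)"
      unfolding abs_mult using hb[of w] by (intro mult_mono) auto
  qed (use X in auto)
  moreover have "(LINT w:{X..x}|lborel. h w * exp (w - x)) \<le> (LINT w:{X..x}|lborel. y * exp (w - x))"
  proof (rule set_integral_Icc_mono[where M="max C \<bar>y\<bar>"])
    fix w assume w: "w \<in> {X..x}"
    show "\<bar>h w * exp (w - x)\<bar> \<le> max C \<bar>y\<bar>" using hx[of w] w by simp
    show "\<bar>y * exp (w - x)\<bar> \<le> max C \<bar>y\<bar>"
      using abs_mult_exp_le[of y "\<bar>y\<bar>" w x] w by simp
    show "h w * exp (w - x) \<le> y * exp (w - x)"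
      using le[of w] w by (intro mult_right_mono) auto
  qed auto
  moreover have "(LINT w:{X..x}|lborel. y * exp (w - x)) = y - y * exp (X - x)"
    by (subst set_integral_Icc_FTC[where F="\<lambda>w. y * exp (w - x)"])
       (use X in \<open>auto intro!: derivative_eq_intros continuous_intros\<close>)
  moreover have "- y * exp (X - x) \<le> \<bar>y\<bar> * exp (X - x)"
    by (intro mult_right_mono) auto
  ultimately show ?thesis
    by (simp add: algebra_simps abs_le_iff)
qed

lemma Limsup_S_le:
  assumes hm [measurable]: "h \<in> borel_measurable borel" and hb: "\<And>t. \<bar>h t\<bar> \<le> C"
  shows "Limsup at_top (\<lambda>x. ereal (S h x)) \<le> Limsup at_top (\<lambda>x. ereal (h x))"
proof (rule Limsup_le_Limsup_of_eventually_le)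
  fix y e :: real assume y: "Limsup at_top (\<lambda>x. ereal (h x)) < ereal y" and "0 < e"
  obtain X0 where X0: "\<And>x. X0 \<le> x \<Longrightarrow> h x < y"
    using Limsup_lessD[OF y] by (auto simp: eventually_at_top_linorder)
  define X where "X = max X0 0"
  have X: "0 \<le> X" "\<And>x. X \<le> x \<Longrightarrow> h x \<le> y"
    using X0 by (auto simp: X_def less_imp_le)
  have "((\<lambda>x. (C * X + \<bar>y\<bar>) * exp (X - x)) \<longlongrightarrow> 0) at_top" by real_asymp
  then have "eventually (\<lambda>x. (C * X + \<bar>y\<bar>) * exp (X - x) < e) at_top"
    using \<open>0 < e\<close> by (rule order_tendstoD)
  then show "eventually (\<lambda>x. S h x \<le> y + e) at_top"
    using eventually_ge_at_top[of X]
  proof eventually_elim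
    case (elim x)
    then show ?case using S_le_of_le_beyond[OF hm hb X(1) _ X(2), of x] by linarith
  qed
qed

lemma Limsup_window_avg_le:
  assumes hm [measurable]: "h \<in> borel_measurable borel" and hb: "\<And>t. \<bar>h t\<bar> \<le> C" and "0 < \<theta>"
  shows "Limsup at_top (\<lambda>x. ereal (window_avg \<theta> h x)) \<le> Limsup at_top (\<lambda>x. ereal (h x))"
proof (rule Limsup_le_Limsup_of_eventually_le)
  fix y e :: real assume y: "Limsup at_top (\<lambda>x. ereal (h x)) < ereal y" and "0 < e"
  obtain X where X: "\<And>x. X \<le> x \<Longrightarrow> h x < y"
    using Limsup_lessD[OF y] by (auto simp: eventually_at_top_linorder)
  show "eventually (\<lambda>x. window_avg \<theta> h x \<le> y + e) at_top"
    using eventually_ge_at_top[of X]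
  proof eventually_elim
    case (elim x)
    have "(LINT t:{x..x+\<theta>}|lborel. h t) \<le> (LINT t:{x..x+\<theta>}|lborel. y)"
    proof (rule set_integral_Icc_mono[where M="max C \<bar>y\<bar>"])
      fix t assume t: "t \<in> {x..x+\<theta>}"
      show "\<bar>h t\<bar> \<le> max C \<bar>y\<bar>" using hb[of t] by simp
      show "h t \<le> y" using X[of t] t elim by simp
    qed auto
    then have "window_avg \<theta> h x \<le> y"
      using \<open>0 < \<theta>\<close> by (simp add: window_avg_def set_integral_Icc_const divide_le_eq mult.commute)
    then show ?case using \<open>0 < e\<close> by simp
  qed
qed

lemma Limsup_window_avg_S_le:
  assumes hm [measurable]: "h \<in> borel_measurable borel" and hb: "\<And>t. \<bar>h t\<bar> \<le> C" and "0 < \<theta>"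
  shows "Limsup at_top (\<lambda>x. ereal (window_avg \<theta> (S h) x)) \<le>
         Limsup at_top (\<lambda>x. ereal (window_avg \<theta> h x))"
proof -
  have "Limsup at_top (\<lambda>x. ereal (window_avg \<theta> (S h) x)) \<le>
        Limsup at_top (\<lambda>x. ereal (S (window_avg \<theta> h) x))"
  proof (rule Limsup_le_Limsup_of_eventually_le)
    fix y e :: real
    assume y: "Limsup at_top (\<lambda>x. ereal (S (window_avg \<theta> h) x)) < ereal y" and "0 < e"
    have "((\<lambda>x. C * exp (- x)) \<longlongrightarrow> 0) at_top" by real_asymp
    then have "eventually (\<lambda>x. C * exp (- x) < e) at_top"
      using \<open>0 < e\<close> by (rule order_tendstoD)
    with Limsup_lessD[OF y] eventually_ge_at_top[of 0]
    show "eventually (\<lambda>x. window_avg \<theta> (S h) x \<le> y + e) at_top"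
    proof eventually_elim
      case (elim x)
      then have "0 \<le> x" by simp
      then show ?case
        using elim abs_window_avg_S_sub_S_window_avg_le[OF hm hb _ \<open>0 < \<theta>\<close>, of x] by simp
    qed
  qed
  also have "\<dots> \<le> Limsup at_top (\<lambda>x. ereal (window_avg \<theta> h x))"
    by (rule Limsup_S_le[OF _ abs_window_avg_le[OF hm hb \<open>0 < \<theta>\<close>]]) simp
  finally show ?thesis .
qed

lemma Limsup_window_avg_funpow_S_le:
  assumes hm [measurable]: "h \<in> borel_measurable borel" and hb: "\<And>t. \<bar>h t\<bar> \<le> C" and "0 < \<theta>"
  shows "Limsup at_top (\<lambda>x. ereal (window_avg \<theta> ((S ^^ m) h) x)) \<le>
         Limsup at_top (\<lambda>x. ereal (window_avg \<theta> h x))"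
proof (induction m)
  case (Suc m)
  have "\<And>t. \<bar>(S ^^ m) h t\<bar> \<le> C" by (rule abs_funpow_S_le[OF hm hb])
  from Limsup_window_avg_S_le[OF funpow_S_measurable[OF hm] this \<open>0 < \<theta>\<close>]
  have "Limsup at_top (\<lambda>x. ereal (window_avg \<theta> ((S ^^ Suc m) h) x)) \<le>
        Limsup at_top (\<lambda>x. ereal (window_avg \<theta> ((S ^^ m) h) x))"
    by simp
  then show ?case using Suc.IH by (rule order_trans)
qed simp

lemma Limsup_window_avg_le_window_avg_funpow_S:
  assumes hm [measurable]: "h \<in> borel_measurable borel" and hb: "\<And>t. \<bar>h t\<bar> \<le> C" and "0 < \<theta>"
  shows "Limsup at_top (\<lambda>x. ereal (window_avg \<theta> h x)) \<le>
         Limsup at_top (\<lambda>x. ereal (window_avg \<theta> ((S ^^ m) h) x)) + ereal (m * (2 * C / \<theta>))"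
proof (induction m)
  case (Suc m)
  let ?h = "(S ^^ m) h"
  have "Limsup at_top (\<lambda>x. ereal (window_avg \<theta> ?h x)) \<le>
        Limsup at_top (\<lambda>x. ereal (window_avg \<theta> (S ?h) x)) + ereal (2 * C / \<theta>)"
  proof (rule Limsup_le_Limsup_add_of_eventually_le)
    show "eventually (\<lambda>x. window_avg \<theta> ?h x \<le> window_avg \<theta> (S ?h) x + 2 * C / \<theta>) at_top"
      using eventually_ge_at_top[of 0]
    proof eventually_elim
      case (elim x)
      have "\<And>t. \<bar>?h t\<bar> \<le> C" by (rule abs_funpow_S_le[OF hm hb])
      from abs_window_avg_S_sub_le[OF funpow_S_measurable[OF hm] this \<open>0 < \<theta>\<close> elim]
      show ?case by simp
    qed
  qed
  then have "Limsup at_top (\<lambda>x. ereal (window_avg \<theta> ?h x)) + ereal (m * (2 * C / \<theta>)) \<le>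
      Limsup at_top (\<lambda>x. ereal (window_avg \<theta> (S ?h) x)) + ereal (2 * C / \<theta>) + ereal (m * (2 * C / \<theta>))"
    by (rule add_right_mono)
  also have "\<dots> = Limsup at_top (\<lambda>x. ereal (window_avg \<theta> (S ?h) x)) + ereal (Suc m * (2 * C / \<theta>))"
    by (simp only: add.assoc plus_ereal.simps(1)) (simp add: algebra_simps add_divide_distrib)
  finally show ?case using Suc.IH by simp
qed simp

lemma Limsup_window_avg_le_funpow_S:
  assumes hm [measurable]: "h \<in> borel_measurable borel" and hb: "\<And>t. \<bar>h t\<bar> \<le> C" and "0 < \<theta>"
  shows "Limsup at_top (\<lambda>x. ereal (window_avg \<theta> h x)) \<le>
         Limsup at_top (\<lambda>x. ereal ((S ^^ m) h x)) + ereal (m * (2 * C / \<theta>))"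
proof -
  have "\<And>t. \<bar>(S ^^ m) h t\<bar> \<le> C" by (rule abs_funpow_S_le[OF hm hb])
  from add_right_mono[OF Limsup_window_avg_le[OF funpow_S_measurable[OF hm] this \<open>0 < \<theta>\<close>]]
  show ?thesis
    by (rule order_trans[OF Limsup_window_avg_le_window_avg_funpow_S[OF hm hb \<open>0 < \<theta>\<close>, of m]])
qed

lemma Limsup_funpow_S_le_window_avg:
  assumes hm [measurable]: "h \<in> borel_measurable borel" and hb: "\<And>t. \<bar>h t\<bar> \<le> C" and "0 < \<theta>"
  shows "Limsup at_top (\<lambda>x. ereal ((S ^^ Suc (Suc n)) h x)) \<le>
         Limsup at_top (\<lambda>x. ereal (window_avg \<theta> h x)) + ereal (\<theta> * (2 * C * erlang (Suc n) (Suc n)))"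
proof -
  let ?u = "(S ^^ Suc (Suc n)) h"
  have "Limsup at_top (\<lambda>x. ereal (?u x)) \<le>
        Limsup at_top (\<lambda>x. ereal (window_avg \<theta> ?u x)) + ereal (\<theta> * (2 * C * erlang (Suc n) (Suc n)))"
  proof (rule Limsup_le_Limsup_add_of_eventually_le)
    show "eventually (\<lambda>x. ?u x \<le> window_avg \<theta> ?u x + \<theta> * (2 * C * erlang (Suc n) (Suc n))) at_top"
      using eventually_ge_at_top[of 0]
    proof eventually_elim
      case (elim x)
      then show ?case using abs_funpow_S_sub_window_avg_le[OF hm hb elim \<open>0 < \<theta>\<close>, of n] by linarith
    qed
  qed
  also have "\<dots> \<le> Limsup at_top (\<lambda>x. ereal (window_avg \<theta> h x)) + ereal (\<theta> * (2 * C * erlang (Suc n) (Suc n)))"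
    by (intro add_right_mono Limsup_window_avg_funpow_S_le[OF hm hb \<open>0 < \<theta>\<close>])
  finally show ?thesis .
qed

lemma Limsup_Limsup_window_avg_le_funpow_S:
  assumes hm [measurable]: "h \<in> borel_measurable borel" and hb: "\<And>t. \<bar>h t\<bar> \<le> C"
  shows "Limsup at_top (\<lambda>\<theta>. Limsup at_top (\<lambda>x. ereal (window_avg \<theta> h x))) \<le>
         Limsup at_top (\<lambda>x. ereal ((S ^^ m) h x))"
proof (rule ereal_le_epsilon2)
  fix \<epsilon> :: real assume "0 < \<epsilon>"
  have "((\<lambda>\<theta>. m * (2 * C / \<theta>)) \<longlongrightarrow> 0) at_top" by real_asymp
  then have "eventually (\<lambda>\<theta>. m * (2 * C / \<theta>) < \<epsilon>) at_top"
    using \<open>0 < \<epsilon>\<close> by (rule order_tendstoD)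
  with eventually_gt_at_top[of 0]
  have "eventually (\<lambda>\<theta>. Limsup at_top (\<lambda>x. ereal (window_avg \<theta> h x)) \<le>
                          Limsup at_top (\<lambda>x. ereal ((S ^^ m) h x)) + ereal \<epsilon>) at_top"
  proof eventually_elim
    case (elim \<theta>)
    then show ?case
      using Limsup_window_avg_le_funpow_S[OF hm hb, of \<theta> m] add_left_mono[of "ereal (m * (2 * C / \<theta>))" "ereal \<epsilon>"]
      by (force intro: order_trans)
  qed
  then show "Limsup at_top (\<lambda>\<theta>. Limsup at_top (\<lambda>x. ereal (window_avg \<theta> h x))) \<le>
             Limsup at_top (\<lambda>x. ereal ((S ^^ m) h x)) + ereal \<epsilon>"
    by (rule Limsup_bounded)
qed

lemma Limsup_Limsup_funpow_S_le_window_avg: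
  assumes hm [measurable]: "h \<in> borel_measurable borel" and hb: "\<And>t. \<bar>h t\<bar> \<le> C" and "0 < \<theta>"
  shows "Limsup sequentially (\<lambda>k. Limsup at_top (\<lambda>x. ereal ((S ^^ Suc k) h x))) \<le>
         Limsup at_top (\<lambda>x. ereal (window_avg \<theta> h x))"
proof (rule ereal_le_epsilon2)
  fix \<epsilon> :: real assume "0 < \<epsilon>"
  have "(\<lambda>k. \<theta> * (2 * C * erlang k k)) \<longlonglongrightarrow> 0"
    by (intro tendsto_mult_right_zero erlang_mode_tendsto_0)
  then have "eventually (\<lambda>k. \<theta> * (2 * C * erlang k k) < \<epsilon>) sequentially"
    using \<open>0 < \<epsilon>\<close> by (rule order_tendstoD)
  with eventually_gt_at_top[of 0]
  have "eventually (\<lambda>k. Limsup at_top (\<lambda>x. ereal ((S ^^ Suc k) h x)) \<le>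
                         Limsup at_top (\<lambda>x. ereal (window_avg \<theta> h x)) + ereal \<epsilon>) sequentially"
  proof eventually_elim
    case (elim k)
    then obtain n where "k = Suc n" by (cases k) auto
    with elim show ?case
      using Limsup_funpow_S_le_window_avg[OF hm hb \<open>0 < \<theta>\<close>, of n]
        add_left_mono[of "ereal (\<theta> * (2 * C * erlang k k))" "ereal \<epsilon>"]
      by (force intro: order_trans)
  qed
  then show "Limsup sequentially (\<lambda>k. Limsup at_top (\<lambda>x. ereal ((S ^^ Suc k) h x))) \<le>
             Limsup at_top (\<lambda>x. ereal (window_avg \<theta> h x)) + ereal \<epsilon>"
    by (rule Limsup_bounded)
qed

lemma lim_Limsup_funpow_S_eq_Lim_Limsup_window_avg:
  assumes hm [measurable]: "h \<in> borel_measurable borel" and hb: "\<And>t. \<bar>h t\<bar> \<le> C"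
  shows "lim (\<lambda>k. Limsup at_top (\<lambda>x. ereal ((S ^^ Suc k) h x))) =
         Lim at_top (\<lambda>\<theta>. Limsup at_top (\<lambda>x. ereal (window_avg \<theta> h x)))"
proof -
  let ?E = "\<lambda>k. Limsup at_top (\<lambda>x. ereal ((S ^^ Suc k) h x))"
  let ?G = "\<lambda>\<theta>. Limsup at_top (\<lambda>x. ereal (window_avg \<theta> h x))"
  have bounds: "Limsup at_top ?G \<le> ?E k" "eventually (\<lambda>\<theta>. Limsup sequentially ?E \<le> ?G \<theta>) at_top" for k
  proof -
    show "Limsup at_top ?G \<le> ?E k"
      by (rule Limsup_Limsup_window_avg_le_funpow_S[OF hm hb])
    show "eventually (\<lambda>\<theta>. Limsup sequentially ?E \<le> ?G \<theta>) at_top"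
      using eventually_gt_at_top[of 0]
      by eventually_elim (rule Limsup_Limsup_funpow_S_le_window_avg[OF hm hb])
  qed
  have "lim ?E = Limsup at_top ?G"
    using tendsto_Limsup_of_interlaced_bounds(1)[OF bounds] by (rule limI)
  also have "\<dots> = Lim at_top ?G"
    using tendsto_Limsup_of_interlaced_bounds(2)[OF bounds] by (intro tendsto_Lim[symmetric]) simp_all
  finally show ?thesis .
qed

section \<open>Essentially bounded functions\<close>

lemma Linf_AE_eq_bounded_borel:
  assumes "f \<in> Linf"
  obtains g C where "g \<in> borel_measurable borel" "\<And>t. \<bar>g t\<bar> \<le> C"
    "AE t in lebesgue. indicator {0..} t *\<^sub>R f t = g t"
proof -
  define F where "F t = indicator {0..} t *\<^sub>R f t" for t :: real
  from assms obtain C0 where "F \<in> borel_measurable lebesgue"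
    and bound: "AE x in lebesgue. x \<in> {0..} \<longrightarrow> \<bar>f x\<bar> \<le> C0"
    unfolding Linf_def set_borel_measurable_def F_def by auto
  then obtain g0 where g0: "g0 \<in> borel_measurable lborel" "AE x in lborel. F x = g0 x"
    using completion_ex_borel_measurable_real[of F lborel] by auto
  define C where "C = max C0 0"
  define g where "g x = (if \<bar>g0 x\<bar> \<le> C then g0 x else 0)" for x
  have gm: "g \<in> borel_measurable borel"
    using g0(1) unfolding g_def measurable_lborel1 by measurable
  have gb: "\<bar>g t\<bar> \<le> C" for t by (simp add: g_def C_def)
  have "AE x in lborel. F x = g x"
    using g0(2) bound[unfolded AE_completion_iff]
  proof eventually_elim
    case (elim x)
    then show ?case by (cases "0 \<le> x") (auto simp: g_def F_def C_def)
  qed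
  then have "AE x in lebesgue. F x = g x" by (simp add: AE_completion_iff)
  then show ?thesis by (intro that[OF gm gb]) (simp add: F_def)
qed

lemma set_integral_Linf_eq_borel:
  assumes f: "f \<in> Linf" and [measurable]: "g \<in> borel_measurable borel"
    and ae: "AE t in lebesgue. indicator {0..} t *\<^sub>R f t = g t"
    and A: "A \<subseteq> {0..}" "A \<in> sets borel" and [measurable]: "k \<in> borel_measurable borel"
  shows "(LINT t:A|lebesgue. f t * k t) = (LINT t:A|lborel. g t * k t)"
proof -
  define F where "F t = indicator {0..} t *\<^sub>R f t" for t :: real
  have Fm: "F \<in> borel_measurable lebesgue"
    using f unfolding Linf_def set_borel_measurable_def F_def by auto
  have gm: "g \<in> borel_measurable lebesgue" and km: "k \<in> borel_measurable lebesgue"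
    by (simp_all add: measurable_completion measurable_lborel1)
  have Am: "indicator A \<in> borel_measurable lebesgue"
    using A(2) by (intro borel_measurable_indicator) (simp add: sets_completionI_sets)
  have "(LINT t:A|lebesgue. f t * k t) = integral\<^sup>L lebesgue (\<lambda>t. indicator A t * (F t * k t))"
    unfolding set_lebesgue_integral_def
    by (rule Bochner_Integration.integral_cong[OF refl]) (use A in \<open>auto simp: F_def indicator_def\<close>)
  also have "\<dots> = integral\<^sup>L lebesgue (\<lambda>t. indicator A t * (g t * k t))"
  proof (rule integral_cong_AE)
    show "(\<lambda>t. indicator A t * (F t * k t)) \<in> borel_measurable lebesgue"
      using Am Fm km by measurable
    show "(\<lambda>t. indicator A t * (g t * k t)) \<in> borel_measurable lebesgue"
      using Am gm km by measurable
    show "AE t in lebesgue. indicator A t * (F t * k t) = indicator A t * (g t * k t)"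
      using ae by eventually_elim (simp add: F_def)
  qed
  also have "\<dots> = integral\<^sup>L lborel (\<lambda>t. indicator A t * (g t * k t))"
    by (rule integral_completion) (use A(2) in \<open>simp add: measurable_lborel1\<close>)
  finally show ?thesis by (simp add: set_lebesgue_integral_def)
qed

lemma Sop_eq_S:
  assumes [measurable]: "h \<in> borel_measurable borel"
  shows "Sop h = S h"
proof
  fix x
  have "(\<lambda>t. indicator {0..x} t *\<^sub>R (h t * exp t)) \<in> borel_measurable lborel"
    unfolding measurable_lborel1 by measurable
  then show "Sop h x = S h x"
    unfolding Sop_def S_def set_lebesgue_integral_def by (simp add: integral_completion)
qed

lemma funpow_Sop_eq_funpow_S:
  assumes "h \<in> borel_measurable borel"
  shows "(Sop ^^ k) h = (S ^^ k) h"
  using assms by (induction k) (simp_all add: Sop_eq_S)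

lemma Linf_uminus: "f \<in> Linf \<Longrightarrow> (\<lambda>x. - f x) \<in> Linf"
  unfolding Linf_def set_borel_measurable_def by auto

lemma Ebar_inf_eq_Mbar1:
  assumes f: "f \<in> Linf"
  shows "Ebar_inf f = Mbar1 f"
proof -
  obtain g C where gm [measurable]: "g \<in> borel_measurable borel" and gb: "\<And>t. \<bar>g t\<bar> \<le> C"
    and ae: "AE t in lebesgue. indicator {0..} t *\<^sub>R f t = g t"
    using Linf_AE_eq_bounded_borel[OF f] by blast
  have "Sop f = S g"
    using set_integral_Linf_eq_borel[OF f gm ae, of "{0..x}" exp for x] by (auto simp: Sop_def S_def)
  then have "(Sop ^^ Suc k) f = (S ^^ Suc k) g" for k
    by (simp del: funpow.simps add: funpow_Suc_right funpow_Sop_eq_funpow_S)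
  then have E: "(\<lambda>k. Ebar (Suc k) f) = (\<lambda>k. Limsup at_top (\<lambda>x. ereal ((S ^^ Suc k) g x)))"
    by (simp add: Ebar_def)
  have "eventually (\<lambda>x. (1 / \<theta>) * (LINT t:{x..x+\<theta>}|lebesgue. f t) = window_avg \<theta> g x) at_top" for \<theta>
    using eventually_ge_at_top[of 0]
    by eventually_elim (use set_integral_Linf_eq_borel[OF f gm ae, of _ "\<lambda>_. 1"] in \<open>simp add: window_avg_def\<close>)
  then have M: "(\<lambda>\<theta>. Limsup at_top (\<lambda>x. ereal ((1 / \<theta>) * (LINT t:{x..x+\<theta>}|lebesgue. f t)))) =
                (\<lambda>\<theta>. Limsup at_top (\<lambda>x. ereal (window_avg \<theta> g x)))"
    by (intro ext Limsup_eq) (auto elim: eventually_mono)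
  show ?thesis
    unfolding Ebar_inf_def Mbar1_def E M
    by (rule lim_Limsup_funpow_S_eq_Lim_Limsup_window_avg[OF gm gb])
qed

theorem theorem5p2:
  shows "(\<forall>f \<in> Linf. Ebar_inf f = Mbar1 f) \<and>
         sm_domain Ebar_inf = sm_domain Mbar1 \<and>
         (\<forall>f \<in> sm_domain Ebar_inf. Ebar_inf f = Mbar1 f)"
  using Ebar_inf_eq_Mbar1 Linf_uminus unfolding sm_domain_def by auto

end
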